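(* Let $A$ be the adjacency matrix (entries in $\{0,1\}$, $A_{ij}=1$ iff there is an edge from $j$ to $i$) of a directed graph with $N$ vertices and $M\ge 1$ edges. Let $k_{\max}$ be the maximum among all in-degrees $k_i^{\mathrm{in}}=\sum_j A_{ij}$ and out-degrees $k_j^{\mathrm{out}}=\sum_i A_{ij}$ of the graph. Then \[\mathrm{srank}(A)\le \frac{M}{k_{\max}}.\]
   Context: The stable rank of a nonzero matrix $A$ is $\mathrm{srank}(A)=\|A\|_F^2/\|A\|_2^2=\sum_i\sigma_i^2/\sigma_1^2$, where $\sigma_1\ge\sigma_2\ge\cdots$ are the singular values of $A$, $\|\cdot\|_F$ is the Frobenius norm and $\|\cdot\|_2$ the spectral norm. *)

theory Defs
  imports "HOL-Analysis.Analysis"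
begin

definition frobenius_norm :: "real^'n^'m \<Rightarrow> real" where
  "frobenius_norm A = sqrt (\<Sum>i\<in>UNIV. \<Sum>j\<in>UNIV. (A $ i $ j)^2)"

definition spectral_norm :: "real^'n^'m \<Rightarrow> real" where
  "spectral_norm A = onorm (\<lambda>x. A *v x)"

definition srank :: "real^'n^'m \<Rightarrow> real" where
  "srank A = (frobenius_norm A)^2 / (spectral_norm A)^2"

(* adjacency convention: A $ i $ j = 1 iff edge from j to i *)
definition in_degree :: "real^'n^'n \<Rightarrow> 'n \<Rightarrow> real" where
  "in_degree A i = (\<Sum>j\<in>UNIV. A $ i $ j)"

definition out_degree :: "real^'n^'n \<Rightarrow> 'n \<Rightarrow> real" where
  "out_degree A j = (\<Sum>i\<in>UNIV. A $ i $ j)"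

definition num_edges :: "real^'n^'n \<Rightarrow> real" where
  "num_edges A = (\<Sum>i\<in>UNIV. \<Sum>j\<in>UNIV. A $ i $ j)"

definition max_degree :: "real^'n^'n \<Rightarrow> real" where
  "max_degree A = Max (range (in_degree A) \<union> range (out_degree A))"

end

theory Submission
  imports Defs
begin

(* The squared Frobenius norm of a 0-1 matrix counts its edges, while the squared
   spectral norm dominates the squared Euclidean norm of every row and every column,
   which for a 0-1 matrix are the in- and out-degrees. Hence M / srank(A) is the
   squared spectral norm, which is at least k_max. *)

lemma norm_matrix_vector_le_spectral_norm:
  fixes A :: "real^'n^'m"
  shows "norm (A *v x) \<le> spectral_norm A * norm x"
  unfolding spectral_norm_def by (rule onorm[OF matrix_vector_mul_bounded_linear])

lemma spectral_norm_nonneg: "spectral_norm (A :: real^'n^'m) \<ge> 0"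
  unfolding spectral_norm_def by (rule onorm_pos_le[OF matrix_vector_mul_bounded_linear])

lemma norm_column_le_spectral_norm:
  fixes A :: "real^'n^'m"
  shows "norm (column j A) \<le> spectral_norm A"
  unfolding spectral_norm_def by (rule norm_column_le_onorm)

lemma norm_row_le_spectral_norm:
  fixes A :: "real^'n^'m"
  shows "norm (row i A) \<le> spectral_norm A"
proof (cases "row i A = 0")
  case True
  then show ?thesis by (simp add: spectral_norm_nonneg)
next
  case False
  have "(norm (row i A))\<^sup>2 = (A *v row i A) $ i"
    by (simp add: matrix_vector_mult_def row_def power2_norm_eq_inner inner_vec_def)
  also have "\<dots> \<le> norm (A *v row i A)"
    by (rule order_trans[OF abs_ge_self component_le_norm_cart])
  also have "\<dots> \<le> spectral_norm A * norm (row i A)"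
    by (rule norm_matrix_vector_le_spectral_norm)
  finally show ?thesis
    using False by (simp add: power2_eq_square)
qed

lemma norm_power2_vec: "(norm (x :: real^'n))\<^sup>2 = (\<Sum>i\<in>UNIV. (x $ i)\<^sup>2)"
  unfolding power2_norm_eq_inner inner_vec_def by (simp add: power2_eq_square)

lemma frobenius_norm_power2:
  "(frobenius_norm A)\<^sup>2 = (\<Sum>i\<in>UNIV. \<Sum>j\<in>UNIV. (A $ i $ j)\<^sup>2)"
  by (simp add: frobenius_norm_def sum_nonneg)

lemma zero_one_power2_eq:
  assumes "\<forall>i j. A $ i $ j = 0 \<or> A $ i $ j = (1::real)"
  shows "(A $ i $ j)\<^sup>2 = A $ i $ j"
  using assms by (metis one_power2 zero_power2)

lemma
  fixes A :: "real^'n^'n"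
  assumes "\<forall>i j. A $ i $ j = 0 \<or> A $ i $ j = 1"
  shows norm_power2_row_eq_in_degree: "(norm (row i A))\<^sup>2 = in_degree A i"
    and norm_power2_column_eq_out_degree: "(norm (column j A))\<^sup>2 = out_degree A j"
    and frobenius_norm_power2_eq_num_edges: "(frobenius_norm A)\<^sup>2 = num_edges A"
  using zero_one_power2_eq[OF assms]
  by (simp_all add: norm_power2_vec frobenius_norm_power2 row_def column_def
      in_degree_def out_degree_def num_edges_def)

lemma max_degree_le_spectral_norm_power2:
  fixes A :: "real^'n^'n"
  assumes "\<forall>i j. A $ i $ j = 0 \<or> A $ i $ j = 1"
  shows "max_degree A \<le> (spectral_norm A)\<^sup>2"
proof -
  have "in_degree A i \<le> (spectral_norm A)\<^sup>2" for i
    unfolding norm_power2_row_eq_in_degree[OF assms, symmetric]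
    by (intro power_mono norm_row_le_spectral_norm) simp
  moreover have "out_degree A j \<le> (spectral_norm A)\<^sup>2" for j
    unfolding norm_power2_column_eq_out_degree[OF assms, symmetric]
    by (intro power_mono norm_column_le_spectral_norm) simp
  ultimately show ?thesis
    unfolding max_degree_def by (subst Max_le_iff) auto
qed

lemma max_degree_pos:
  fixes A :: "real^'n^'n"
  assumes "num_edges A > 0"
  shows "max_degree A > 0"
proof -
  have "num_edges A = (\<Sum>i\<in>UNIV. in_degree A i)"
    by (simp add: num_edges_def in_degree_def)
  with assms obtain i where "in_degree A i > 0"
    by (metis not_le sum_nonpos)
  moreover have "in_degree A i \<le> max_degree A"
    unfolding max_degree_def by (intro Max_ge) auto
  ultimately show ?thesis by linarith
qed

theorem propositionS16:
  fixes A :: "real^'n^'n"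
  assumes "\<forall>i j. A $ i $ j = 0 \<or> A $ i $ j = 1"
    and "num_edges A \<ge> 1"
  shows "srank A \<le> num_edges A / max_degree A"
proof -
  have k_pos: "max_degree A > 0"
    using assms(2) by (intro max_degree_pos) simp
  have k_le: "max_degree A \<le> (spectral_norm A)\<^sup>2"
    using assms(1) by (rule max_degree_le_spectral_norm_power2)
  have "num_edges A / (spectral_norm A)\<^sup>2 \<le> num_edges A / max_degree A"
    using assms(2) k_pos k_le by (intro divide_left_mono mult_pos_pos) auto
  then show ?thesis
    by (simp add: srank_def frobenius_norm_power2_eq_num_edges[OF assms(1)])
qed

end
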